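(* Let $L$ be a free $O_p$-module of finite rank $t$, $\xi:L\to L$ an $O_p$-linear endomorphism, and $K\subseteq L$ an $O_p[\xi]$-submodule with $\xi(K)\subseteq p^nL$ and $L/K\cong\bigoplus_{i=1}^{t}O_p/p^{a_i}O_p$ with $n\ge a_1\ge a_2\ge\dots\ge a_t\ge0$. Put $b_i=n-a_i$ and $B(j)=\sum_{i=1}^jb_i$. Write the characteristic polynomial of $\xi$ on $L$ as $\det(X-\xi)=\sum_{s=0}^td_sX^{t-s}$. Then $d_s\equiv0\bmod p^{B(s)}$ for all $0\le s\le t$.
   Context: $O_p$ is the completion at $p$ of the ring of integers $O$ of an imaginary quadratic field in which the odd rational prime $p$ is inert (a complete discrete valuation ring with uniformizer $p$). *)

theory Defs
  imports "HOL-Computational_Algebra.Polynomial" "Jordan_Normal_Form.Char_Poly"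
begin

text \<open>The ring O_p: the completion at p of the ring of integers of an imaginary
quadratic field in which the odd prime p is inert.  Up to isomorphism this is the
unique complete discrete valuation ring of characteristic 0 with uniformizer p and
residue field of p^2 elements (the unramified quadratic extension of Z_p).\<close>

definition p_cauchy :: "nat \<Rightarrow> (nat \<Rightarrow> 'a::comm_ring_1) \<Rightarrow> bool" where
  "p_cauchy p x \<longleftrightarrow> (\<forall>k. \<exists>N. \<forall>m\<ge>N. \<forall>m'\<ge>N. (of_nat p :: 'a) ^ k dvd x m - x m')"

definition p_converges_to :: "nat \<Rightarrow> (nat \<Rightarrow> 'a::comm_ring_1) \<Rightarrow> 'a \<Rightarrow> bool" where
  "p_converges_to p x l \<longleftrightarrow> (\<forall>k. \<exists>N. \<forall>m\<ge>N. (of_nat p :: 'a) ^ k dvd x m - l)"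

definition Op_ring :: "nat \<Rightarrow> 'a::idom itself \<Rightarrow> bool" where
  "Op_ring p _ \<longleftrightarrow>
     prime p \<and> odd p
     \<comment> \<open>characteristic zero\<close>
     \<and> inj (of_nat :: nat \<Rightarrow> 'a)
     \<comment> \<open>discrete valuation ring with uniformizer p\<close>
     \<and> \<not> ((of_nat p :: 'a) dvd 1)
     \<and> (\<forall>x::'a. x \<noteq> 0 \<longrightarrow> (\<exists>u k. u dvd 1 \<and> x = u * of_nat p ^ k))
     \<comment> \<open>complete for the p-adic topology\<close>
     \<and> (\<forall>x::nat \<Rightarrow> 'a. p_cauchy p x \<longrightarrow> (\<exists>l. p_converges_to p x l))
     \<comment> \<open>residue field O_p / p O_p has p^2 elements (p is inert)\<close>
     \<and> card (range (\<lambda>x::'a. {y. (of_nat p :: 'a) dvd x - y})) = p ^ 2"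

text \<open>Componentwise congruence in O_p^t modulo (p^{a_1},...,p^{a_t}); the vector
index i (0-based) corresponds to the paper's index i+1.\<close>
definition cong_diag :: "'a::comm_ring_1 \<Rightarrow> nat \<Rightarrow> (nat \<Rightarrow> nat) \<Rightarrow> 'a vec \<Rightarrow> 'a vec \<Rightarrow> bool" where
  "cong_diag \<pi> t a u v \<longleftrightarrow> (\<forall>i<t. \<pi> ^ a (Suc i) dvd u $ i - v $ i)"

text \<open>L/K is isomorphic to the direct sum of O_p/p^{a_i} O_p (i = 1..t), L = O_p^t:
there is an O_p-module homomorphism from L onto the direct sum (represented by
representatives in O_p^t modulo cong_diag) whose kernel is exactly K.\<close>
definition quotient_iso_diag :: "'a::comm_ring_1 \<Rightarrow> nat \<Rightarrow> 'a vec set \<Rightarrow> (nat \<Rightarrow> nat) \<Rightarrow> bool" where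
  "quotient_iso_diag \<pi> t K a \<longleftrightarrow>
    (\<exists>\<psi>. (\<forall>x\<in>carrier_vec t. \<psi> x \<in> carrier_vec t)
       \<and> (\<forall>x\<in>carrier_vec t. \<forall>y\<in>carrier_vec t. cong_diag \<pi> t a (\<psi> (x + y)) (\<psi> x + \<psi> y))
       \<and> (\<forall>c. \<forall>x\<in>carrier_vec t. cong_diag \<pi> t a (\<psi> (c \<cdot>\<^sub>v x)) (c \<cdot>\<^sub>v \<psi> x))
       \<and> (\<forall>y\<in>carrier_vec t. \<exists>x\<in>carrier_vec t. cong_diag \<pi> t a (\<psi> x) y)
       \<and> (\<forall>x\<in>carrier_vec t. x \<in> K \<longleftrightarrow> cong_diag \<pi> t a (\<psi> x) (0\<^sub>v t)))"

end

theory Submission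
  imports Defs
begin

(* Lift the standard generators of L/K to y_1, ..., y_t in L. Then p^{a_i} y_i lies in K,
   so xi y_i is in p^{b_i} L, and together with suitable z_1, ..., z_t in K, for which
   xi z_k is in p^n L, these vectors generate L. Expanding det 1 = 1 multilinearly along
   the generators, some t of them have a determinant prime to p, i.e. they form a basis of L.
   In that basis the k-th column of the matrix of xi is divisible by p^{w_k}, where the
   weights w_k belong to distinct generators, hence are distinct entries of the list
   b_1 <= ... <= b_t <= n = ... = n. So every s x s principal minor, and with it d_s, is
   divisible by p to a sum of s such weights, which is at least B(s). *)

lemma prod_monom: "finite I \<Longrightarrow> (\<Prod>i\<in>I. monom (u i) d) = monom (prod u I) (d * card I)"
  by (induction I rule: finite_induct) (simp_all add: mult_monom)

lemma coeff_prod_linear: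
  fixes c u :: "'i \<Rightarrow> 'a::comm_ring_1"
  assumes I: "finite I"
  shows "coeff (\<Prod>i\<in>I. [:c i, u i:]) k =
    (\<Sum>X | X \<subseteq> I \<and> card (I - X) = k. (\<Prod>i\<in>X. c i) * (\<Prod>i\<in>I - X. u i))"
proof -
  have "[:c i, u i:] = [:c i:] + monom (u i) 1" for i
    by (simp add: monom_Suc monom_0)
  then have "(\<Prod>i\<in>I. [:c i, u i:]) =
      (\<Sum>X\<in>Pow I. [:prod c X:] * monom (prod u (I - X)) (card (I - X)))"
    using I by (simp add: prod_add prod_to_poly prod_monom)
  then have "coeff (\<Prod>i\<in>I. [:c i, u i:]) k =
      (\<Sum>X\<in>Pow I. if card (I - X) = k then prod c X * prod u (I - X) else 0)"
    by (auto simp: coeff_sum coeff_monom intro: sum.cong)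
  also have "\<dots> = (\<Sum>X | X \<subseteq> I \<and> card (I - X) = k. prod c X * prod u (I - X))"
    using I by (simp add: sum.If_cases Collect_conj_eq Pow_def)
  finally show ?thesis .
qed

lemma char_poly_matrix_entry:
  assumes "A \<in> carrier_mat n n" "i < n" "j < n"
  shows "char_poly_matrix A $$ (i, j) = [:- A $$ (i, j), of_bool (i = j):]"
  using assms by (auto simp: char_poly_matrix_def)

lemma coeff_char_poly_dvd:
  fixes A :: "'a::comm_ring_1 mat"
  assumes A: "A \<in> carrier_mat t t"
    and col_dvd: "\<And>i k. i < t \<Longrightarrow> k < t \<Longrightarrow> \<pi> ^ w k dvd A $$ (i, k)"
    and bound: "\<And>S. S \<subseteq> {0..<t} \<Longrightarrow> card S = s \<Longrightarrow> m \<le> sum w S"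
    and s: "s \<le> t"
  shows "\<pi> ^ m dvd coeff (char_poly A) (t - s)"
proof -
  have "char_poly A = (\<Sum>\<sigma> | \<sigma> permutes {0..<t}.
      signof \<sigma> * (\<Prod>i=0..<t. [:- A $$ (i, \<sigma> i), of_bool (i = \<sigma> i):]))"
    unfolding char_poly_def det_def'[OF char_poly_matrix_closed[OF A]]
    by (intro sum.cong refl arg_cong2[where f = "(*)"] prod.cong)
      (auto simp: char_poly_matrix_entry[OF A] permutes_in_image)
  moreover have "\<pi> ^ m dvd coeff (\<Prod>i=0..<t. [:- A $$ (i, \<sigma> i), of_bool (i = \<sigma> i):]) (t - s)"
    if \<sigma>: "\<sigma> permutes {0..<t}" for \<sigma>
    unfolding coeff_prod_linear[OF finite_atLeastLessThan]
  proof (intro dvd_sum dvd_mult2)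
    fix X assume X: "X \<in> {X. X \<subseteq> {0..<t} \<and> card ({0..<t} - X) = t - s}"
    then have card_X: "card X = s"
      using s card_mono[of "{0..<t}" X] by (auto simp: card_Diff_subset finite_subset)
    have inj: "inj_on \<sigma> X" using permutes_inj_on[OF \<sigma>] .
    have "m \<le> sum w (\<sigma> ` X)"
      using X card_X permutes_in_image[OF \<sigma>] by (intro bound) (auto simp: card_image[OF inj])
    also have "\<dots> = (\<Sum>i\<in>X. w (\<sigma> i))" by (simp add: sum.reindex[OF inj])
    finally have "\<pi> ^ m dvd (\<Prod>i\<in>X. \<pi> ^ w (\<sigma> i))" by (simp add: le_imp_power_dvd flip: power_sum)
    also have "\<dots> dvd (\<Prod>i\<in>X. - A $$ (i, \<sigma> i))"
    proof (rule prod_dvd_prod)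
      fix i assume "i \<in> X"
      then have "i < t" "\<sigma> i < t" using X permutes_in_image[OF \<sigma>] by auto
      then show "\<pi> ^ w (\<sigma> i) dvd - A $$ (i, \<sigma> i)" by (simp add: col_dvd)
    qed
    finally show "\<pi> ^ m dvd (\<Prod>i\<in>X. - A $$ (i, \<sigma> i))" .
  qed
  ultimately show ?thesis
    by (auto simp: coeff_sum of_int_poly intro!: dvd_sum)
qed

lemma sum_lessThan_card_le_sum_mono:
  fixes w :: "nat \<Rightarrow> 'a::ordered_comm_monoid_add"
  assumes "mono w" "finite U"
  shows "(\<Sum>j<card U. w j) \<le> sum w U"
  using assms(2)
proof (induction "card U" arbitrary: U)
  case (Suc s)
  define m where "m = Max U"
  have "U \<noteq> {}" using Suc.hyps(2) by auto
  with Suc.prems have m: "m \<in> U" unfolding m_def by (rule Max_in)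
  have "card U \<le> card {0..m}"
    using Suc.prems m_def by (intro card_mono) auto
  then have "w s \<le> w m" using Suc.hyps(2) \<open>mono w\<close> by (auto intro: monoD)
  moreover have "(\<Sum>j<s. w j) \<le> sum w (U - {m})"
    using Suc.hyps Suc.prems m by (metis card_Diff_singleton diff_Suc_1 finite_Diff)
  ultimately have "(\<Sum>j<Suc s. w j) \<le> w m + sum w (U - {m})"
    by (simp add: add_mono add.commute)
  also have "\<dots> = sum w U" using Suc.prems m by (simp add: sum.remove)
  finally show ?case using Suc.hyps(2) by simp
qed simp

lemma inj_on_if_det_rows_nonzero:
  assumes "det (mat\<^sub>r t t (\<lambda>k. V (f k))) \<noteq> (0 :: 'a::comm_ring_1)"
  shows "inj_on f {0..<t}"
proof (rule inj_onI, rule ccontr)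
  fix i j assume ij: "i \<in> {0..<t}" "j \<in> {0..<t}" "f i = f j" "i \<noteq> j"
  have "row (mat\<^sub>r t t (\<lambda>k. V (f k))) i = row (mat\<^sub>r t t (\<lambda>k. V (f k))) j"
    using ij by (intro eq_vecI) auto
  then have "det (mat\<^sub>r t t (\<lambda>k. V (f k))) = 0"
    using ij by (intro det_identical_rows[of _ t i j]) auto
  with assms show False by simp
qed

lemma det_not_dvd_select_rows:
  fixes V :: "nat \<Rightarrow> 'a::comm_ring_1 vec"
  assumes nonunit: "\<not> \<pi> dvd 1" and M: "finite M"
    and V: "\<And>m. m \<in> M \<Longrightarrow> V m \<in> carrier_vec t"
    and span: "\<And>k. k < t \<Longrightarrow> unit_vec t k = finsum_vec TYPE('a) t (\<lambda>m. c k m \<cdot>\<^sub>v V m) M"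
  obtains f where "\<And>k. k < t \<Longrightarrow> f k \<in> M" "inj_on f {0..<t}"
    "\<not> \<pi> dvd det (mat\<^sub>r t t (\<lambda>k. V (f k)))"
proof -
  let ?F = "{f. (\<forall>i\<in>{0..<t}. f i \<in> M) \<and> (\<forall>i. i \<notin> {0..<t} \<longrightarrow> f i = i)}"
  have "mat\<^sub>r t t (\<lambda>k. finsum_vec TYPE('a) t (\<lambda>m. c k m \<cdot>\<^sub>v V m) M) = mat\<^sub>r t t (unit_vec t)"
    using span by (intro eq_matI) simp_all
  also have "\<dots> = 1\<^sub>m t" by (rule eq_matI) auto
  finally have "1 = det (mat\<^sub>r t t (\<lambda>k. finsum_vec TYPE('a) t (\<lambda>m. c k m \<cdot>\<^sub>v V m) M))"
    by simp
  also have "\<dots> = (\<Sum>f\<in>?F. det (mat\<^sub>r t t (\<lambda>k. c k (f k) \<cdot>\<^sub>v V (f k))))"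
    by (rule det_linear_rows_sum[OF M]) (use V in auto)
  also have "\<dots> = (\<Sum>f\<in>?F. (\<Prod>k\<in>{0..<t}. c k (f k)) * det (mat\<^sub>r t t (\<lambda>k. V (f k))))"
    using V by (intro sum.cong refl det_rows_mul) auto
  finally have one: "1 = (\<Sum>f\<in>?F. (\<Prod>k\<in>{0..<t}. c k (f k)) * det (mat\<^sub>r t t (\<lambda>k. V (f k))))" .
  have "\<exists>f\<in>?F. \<not> \<pi> dvd det (mat\<^sub>r t t (\<lambda>k. V (f k)))"
  proof (rule ccontr)
    assume "\<not> ?thesis"
    then have "\<pi> dvd (\<Sum>f\<in>?F. (\<Prod>k\<in>{0..<t}. c k (f k)) * det (mat\<^sub>r t t (\<lambda>k. V (f k))))"
      by (intro dvd_sum dvd_mult) blast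
    with one nonunit show False by simp
  qed
  then obtain f where f: "f \<in> ?F" and det: "\<not> \<pi> dvd det (mat\<^sub>r t t (\<lambda>k. V (f k)))"
    by blast
  moreover have "inj_on f {0..<t}"
    by (rule inj_on_if_det_rows_nonzero[of t V]) (use det in auto)
  ultimately show ?thesis by (intro that[of f]) auto
qed

lemma unit_det_imp_inverse_mat:
  fixes A :: "'a::comm_ring_1 mat"
  assumes A: "A \<in> carrier_mat n n" and unit: "det A dvd 1"
  obtains B where "B \<in> carrier_mat n n" "A * B = 1\<^sub>m n" "B * A = 1\<^sub>m n"
proof -
  from unit obtain u where u: "det A * u = 1" by (metis dvdE)
  have adj: "adj_mat A \<in> carrier_mat n n" using adj_mat(1)[OF A] .
  have "A * (u \<cdot>\<^sub>m adj_mat A) = u \<cdot>\<^sub>m (det A \<cdot>\<^sub>m 1\<^sub>m n)"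
    using A adj by (simp add: mult_smult_distrib adj_mat(2)[OF A])
  moreover have "u \<cdot>\<^sub>m adj_mat A * A = u \<cdot>\<^sub>m (det A \<cdot>\<^sub>m 1\<^sub>m n)"
    using A adj by (simp add: mult_smult_assoc_mat adj_mat(3)[OF A])
  ultimately show ?thesis
    using adj u by (intro that[of "u \<cdot>\<^sub>m adj_mat A"]) (auto simp: mult.commute)
qed

lemma char_poly_change_of_basis:
  fixes A X :: "'a::comm_ring_1 mat"
  assumes A: "A \<in> carrier_mat t t" and X: "X \<in> carrier_mat t t" and unit: "det X dvd 1"
    and col_dvd: "\<And>i k. i < t \<Longrightarrow> k < t \<Longrightarrow> d k dvd (A *\<^sub>v col X k) $ i"
  obtains C where "C \<in> carrier_mat t t" "char_poly C = char_poly A"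
    "\<And>i k. i < t \<Longrightarrow> k < t \<Longrightarrow> d k dvd C $$ (i, k)"
proof -
  obtain Y where Y: "Y \<in> carrier_mat t t" and XY: "X * Y = 1\<^sub>m t" and YX: "Y * X = 1\<^sub>m t"
    using unit_det_imp_inverse_mat[OF X unit] .
  define C where "C = Y * (A * X)"
  have C: "C \<in> carrier_mat t t" unfolding C_def using Y A X by simp
  have "X * C * Y = (X * Y) * A * (X * Y)"
    unfolding C_def using X Y A by (simp add: assoc_mult_mat[of _ t t _ t _ t])
  then have "A = X * C * Y" using XY A by simp
  then have "similar_mat A C"
    using A C X Y XY YX by (intro similar_matI[of _ _ X Y t]) auto
  then have "char_poly C = char_poly A" by (simp add: char_poly_similar)
  moreover have "d k dvd C $$ (i, k)" if i: "i < t" and k: "k < t" for i k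
  proof -
    have "C $$ (i, k) = row Y i \<bullet> col (A * X) k"
      unfolding C_def using i k Y A X by simp
    also have "\<dots> = row Y i \<bullet> (A *\<^sub>v col X k)" by (simp only: col_mult2[OF A X k])
    also have "\<dots> = (\<Sum>j\<in>{0..<t}. Y $$ (i, j) * (A *\<^sub>v col X k) $ j)"
      using i Y A by (simp add: scalar_prod_def)
    also have "d k dvd \<dots>" using col_dvd k by (intro dvd_sum dvd_mult) auto
    finally show ?thesis .
  qed
  ultimately show ?thesis using C by (intro that[of C])
qed

lemma coeff_char_poly_dvd_generating_family:
  fixes A :: "'a::comm_ring_1 mat" and V :: "nat \<Rightarrow> 'a vec" and w :: "nat \<Rightarrow> nat"
  assumes A: "A \<in> carrier_mat t t"
    and nonunit: "\<not> \<pi> dvd 1" and local: "\<And>x. \<not> \<pi> dvd x \<Longrightarrow> x dvd 1"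
    and M: "finite M" and V: "\<And>m. m \<in> M \<Longrightarrow> V m \<in> carrier_vec t"
    and span: "\<And>k. k < t \<Longrightarrow> unit_vec t k = finsum_vec TYPE('a) t (\<lambda>m. c k m \<cdot>\<^sub>v V m) M"
    and A_V: "\<And>m i. m \<in> M \<Longrightarrow> i < t \<Longrightarrow> \<pi> ^ w m dvd (A *\<^sub>v V m) $ i"
    and w: "mono w" and s: "s \<le> t"
  shows "\<pi> ^ (\<Sum>j<s. w j) dvd coeff (char_poly A) (t - s)"
proof -
  obtain f where f_range: "\<And>k. k < t \<Longrightarrow> f k \<in> M" and f_inj: "inj_on f {0..<t}"
    and det_f: "\<not> \<pi> dvd det (mat\<^sub>r t t (\<lambda>k. V (f k)))"
    using det_not_dvd_select_rows[OF nonunit M V span] by blast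
  define X where "X = transpose_mat (mat\<^sub>r t t (\<lambda>k. V (f k)))"
  have X: "X \<in> carrier_mat t t" by (simp add: X_def)
  have col_X: "col X k = V (f k)" if "k < t" for k
    using that V f_range by (simp add: X_def carrier_vecD)
  have "det X = det (mat\<^sub>r t t (\<lambda>k. V (f k)))"
    unfolding X_def by (rule det_transpose[of _ t]) simp
  then have X_unit: "det X dvd 1" using det_f local by simp
  have X_dvd: "\<pi> ^ w (f k) dvd (A *\<^sub>v col X k) $ i" if "i < t" "k < t" for i k
    unfolding col_X[OF that(2)] using f_range[OF that(2)] that(1) by (rule A_V)
  obtain C where C: "C \<in> carrier_mat t t" "char_poly C = char_poly A"
    and C_dvd: "\<And>i k. i < t \<Longrightarrow> k < t \<Longrightarrow> \<pi> ^ w (f k) dvd C $$ (i, k)"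
    using char_poly_change_of_basis[OF A X X_unit X_dvd] by blast
  have "(\<Sum>j<s. w j) \<le> (\<Sum>k\<in>S. w (f k))" if S: "S \<subseteq> {0..<t}" "card S = s" for S
  proof -
    have inj: "inj_on f S" using f_inj S(1) by (rule inj_on_subset)
    have "(\<Sum>j<s. w j) \<le> sum w (f ` S)"
      using sum_lessThan_card_le_sum_mono[OF w, of "f ` S"] S finite_subset[OF S(1)]
      by (simp add: card_image[OF inj])
    then show ?thesis by (simp add: sum.reindex[OF inj])
  qed
  then show ?thesis
    using coeff_char_poly_dvd[OF C(1) C_dvd _ s] C(2) by simp
qed

lemma cong_diag_refl: "cong_diag \<pi> t a u u"
  by (simp add: cong_diag_def)

lemma cong_diag_trans [trans]:
  "cong_diag \<pi> t a u v \<Longrightarrow> cong_diag \<pi> t a v w \<Longrightarrow> cong_diag \<pi> t a u w"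
  unfolding cong_diag_def by (metis diff_add_cancel add_diff_eq dvd_add)

lemma cong_diag_add:
  assumes "u \<in> carrier_vec t" "u' \<in> carrier_vec t" "v \<in> carrier_vec t" "v' \<in> carrier_vec t"
    and "cong_diag \<pi> t a u u'" "cong_diag \<pi> t a v v'"
  shows "cong_diag \<pi> t a (u + v) (u' + v')"
  using assms unfolding cong_diag_def by (auto simp: add_diff_add intro: dvd_add)

lemma cong_diag_smult:
  assumes "u \<in> carrier_vec t" "u' \<in> carrier_vec t" "cong_diag \<pi> t a u u'"
  shows "cong_diag \<pi> t a (c \<cdot>\<^sub>v u) (c \<cdot>\<^sub>v u')"
  using assms unfolding cong_diag_def by (auto simp: right_diff_distrib[symmetric])

lemma cong_diag_finsum:
  assumes J: "finite J" and uv: "\<And>j. j \<in> J \<Longrightarrow> u j \<in> carrier_vec t \<and> v j \<in> carrier_vec t"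
    and cong: "\<And>j. j \<in> J \<Longrightarrow> cong_diag \<pi> t a (u j) (v j)"
  shows "cong_diag \<pi> t a (finsum_vec TYPE('a::comm_ring_1) t u J) (finsum_vec TYPE('a) t v J)"
  unfolding cong_diag_def
proof (intro allI impI)
  fix i assume i: "i < t"
  have "finsum_vec TYPE('a) t u J $ i - finsum_vec TYPE('a) t v J $ i = (\<Sum>j\<in>J. u j $ i - v j $ i)"
    using J i uv by (simp add: index_finsum_vec sum_subtractf)
  also have "\<pi> ^ a (Suc i) dvd \<dots>"
    using cong i unfolding cong_diag_def by (intro dvd_sum) auto
  finally show "\<pi> ^ a (Suc i) dvd finsum_vec TYPE('a) t u J $ i - finsum_vec TYPE('a) t v J $ i" .
qed

lemma finsum_vec_unit_vec:
  "finsum_vec TYPE('a::comm_ring_1) t (\<lambda>j. f j \<cdot>\<^sub>v unit_vec t j) {0..<t} = vec t f"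
proof (rule eq_vecI)
  fix i assume "i < dim_vec (vec t f)"
  then have i: "i < t" by simp
  have "finsum_vec TYPE('a) t (\<lambda>j. f j \<cdot>\<^sub>v unit_vec t j) {0..<t} $ i =
      (\<Sum>j\<in>{0..<t}. f j * unit_vec t j $ i)"
    using i by (simp add: index_finsum_vec)
  also have "\<dots> = (\<Sum>j\<in>{0..<t}. if j = i then f j else 0)"
    using i by (intro sum.cong) auto
  finally show "finsum_vec TYPE('a) t (\<lambda>j. f j \<cdot>\<^sub>v unit_vec t j) {0..<t} $ i = vec t f $ i"
    using i by simp
qed (simp add: finsum_vec_closed)

locale diag_quotient_map =
  fixes \<pi> :: "'a::comm_ring_1" and t :: nat and a :: "nat \<Rightarrow> nat" and K :: "'a vec set"
    and \<psi> :: "'a vec \<Rightarrow> 'a vec"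
  assumes map_carrier: "\<forall>x\<in>carrier_vec t. \<psi> x \<in> carrier_vec t"
    and map_add: "\<forall>x\<in>carrier_vec t. \<forall>y\<in>carrier_vec t. cong_diag \<pi> t a (\<psi> (x + y)) (\<psi> x + \<psi> y)"
    and map_smult: "\<forall>c. \<forall>x\<in>carrier_vec t. cong_diag \<pi> t a (\<psi> (c \<cdot>\<^sub>v x)) (c \<cdot>\<^sub>v \<psi> x)"
    and map_surj: "\<forall>y\<in>carrier_vec t. \<exists>x\<in>carrier_vec t. cong_diag \<pi> t a (\<psi> x) y"
    and kernel: "\<forall>x\<in>carrier_vec t. x \<in> K \<longleftrightarrow> cong_diag \<pi> t a (\<psi> x) (0\<^sub>v t)"

lemma quotient_iso_diag_iff: "quotient_iso_diag \<pi> t K a \<longleftrightarrow> (\<exists>\<psi>. diag_quotient_map \<pi> t a K \<psi>)"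
  unfolding quotient_iso_diag_def diag_quotient_map_def by (simp only: conj_assoc)

context diag_quotient_map
begin

lemma map_add_finsum:
  assumes J: "finite J" and x: "\<And>j. j \<in> J \<Longrightarrow> x j \<in> carrier_vec t" and u: "u \<in> carrier_vec t"
  shows "cong_diag \<pi> t a (\<psi> (u + finsum_vec TYPE('a) t (\<lambda>j. c j \<cdot>\<^sub>v x j) J))
    (\<psi> u + finsum_vec TYPE('a) t (\<lambda>j. c j \<cdot>\<^sub>v \<psi> (x j)) J)"
  using J x u
proof (induction J arbitrary: u rule: finite_induct)
  case empty
  then show ?case by (simp add: finsum_vec_empty map_carrier cong_diag_refl)
next
  case (insert j J)
  let ?S = "finsum_vec TYPE('a) t (\<lambda>j. c j \<cdot>\<^sub>v x j) J"
  let ?S\<psi> = "finsum_vec TYPE('a) t (\<lambda>j. c j \<cdot>\<^sub>v \<psi> (x j)) J"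
  have xj: "x j \<in> carrier_vec t" and u: "u \<in> carrier_vec t" using insert.prems by auto
  have S: "?S \<in> carrier_vec t" and S\<psi>: "?S\<psi> \<in> carrier_vec t"
    using insert.prems map_carrier by (auto intro!: finsum_vec_closed)
  have \<psi>u: "\<psi> u \<in> carrier_vec t" and \<psi>xj: "\<psi> (x j) \<in> carrier_vec t"
    using u xj map_carrier by auto
  have "finsum_vec TYPE('a) t (\<lambda>j. c j \<cdot>\<^sub>v x j) (insert j J) = c j \<cdot>\<^sub>v x j + ?S"
    using insert.hyps insert.prems by (intro finsum_vec_insert) auto
  then have lhs: "u + finsum_vec TYPE('a) t (\<lambda>j. c j \<cdot>\<^sub>v x j) (insert j J) = (u + c j \<cdot>\<^sub>v x j) + ?S"
    using assoc_add_vec[OF u _ S, of "c j \<cdot>\<^sub>v x j"] xj by simp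
  have step1: "cong_diag \<pi> t a (\<psi> ((u + c j \<cdot>\<^sub>v x j) + ?S)) (\<psi> (u + c j \<cdot>\<^sub>v x j) + ?S\<psi>)"
    using insert.prems u xj by (intro insert.IH) auto
  have step2: "cong_diag \<pi> t a (\<psi> (u + c j \<cdot>\<^sub>v x j) + ?S\<psi>) ((\<psi> u + c j \<cdot>\<^sub>v \<psi> (x j)) + ?S\<psi>)"
  proof (rule cong_diag_add[OF _ _ S\<psi> S\<psi> _ cong_diag_refl])
    have "cong_diag \<pi> t a (\<psi> u + \<psi> (c j \<cdot>\<^sub>v x j)) (\<psi> u + c j \<cdot>\<^sub>v \<psi> (x j))"
      using \<psi>u \<psi>xj xj map_carrier
      by (intro cong_diag_add cong_diag_refl map_smult[rule_format]) auto
    then show "cong_diag \<pi> t a (\<psi> (u + c j \<cdot>\<^sub>v x j)) (\<psi> u + c j \<cdot>\<^sub>v \<psi> (x j))"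
      by (rule cong_diag_trans[OF map_add[rule_format, OF u smult_carrier_vec[THEN iffD2, OF xj]]])
  qed (use u xj \<psi>u \<psi>xj map_carrier in auto)
  have "finsum_vec TYPE('a) t (\<lambda>j. c j \<cdot>\<^sub>v \<psi> (x j)) (insert j J) = c j \<cdot>\<^sub>v \<psi> (x j) + ?S\<psi>"
    using insert.hyps insert.prems map_carrier by (intro finsum_vec_insert) auto
  then have rhs: "(\<psi> u + c j \<cdot>\<^sub>v \<psi> (x j)) + ?S\<psi> =
      \<psi> u + finsum_vec TYPE('a) t (\<lambda>j. c j \<cdot>\<^sub>v \<psi> (x j)) (insert j J)"
    using assoc_add_vec[OF \<psi>u _ S\<psi>, of "c j \<cdot>\<^sub>v \<psi> (x j)"] \<psi>xj by simp
  show ?case unfolding lhs rhs[symmetric] by (rule cong_diag_trans[OF step1 step2])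
qed

lemma smult_lift_mem:
  assumes j: "j < t" and y: "y \<in> carrier_vec t" and lift: "cong_diag \<pi> t a (\<psi> y) (unit_vec t j)"
  shows "\<pi> ^ a (Suc j) \<cdot>\<^sub>v y \<in> K"
proof -
  have "cong_diag \<pi> t a (\<psi> (\<pi> ^ a (Suc j) \<cdot>\<^sub>v y)) (\<pi> ^ a (Suc j) \<cdot>\<^sub>v \<psi> y)"
    using map_smult y by blast
  also have "cong_diag \<pi> t a \<dots> (\<pi> ^ a (Suc j) \<cdot>\<^sub>v unit_vec t j)"
    using lift y map_carrier by (intro cong_diag_smult) auto
  also have "cong_diag \<pi> t a \<dots> (0\<^sub>v t)"
    using j by (auto simp: cong_diag_def)
  finally show ?thesis using kernel y by simp
qed

lemma lift_correction_mem:
  assumes lifts: "\<And>j. j < t \<Longrightarrow> y j \<in> carrier_vec t \<and> cong_diag \<pi> t a (\<psi> (y j)) (unit_vec t j)"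
  shows "unit_vec t k + finsum_vec TYPE('a) t (\<lambda>j. (- \<psi> (unit_vec t k) $ j) \<cdot>\<^sub>v y j) {0..<t} \<in> K"
    (is "?z \<in> K")
proof -
  let ?c = "\<lambda>j. - \<psi> (unit_vec t k) $ j"
  have "cong_diag \<pi> t a (\<psi> ?z)
      (\<psi> (unit_vec t k) + finsum_vec TYPE('a) t (\<lambda>j. ?c j \<cdot>\<^sub>v \<psi> (y j)) {0..<t})"
    using lifts by (intro map_add_finsum) auto
  also have "cong_diag \<pi> t a \<dots>
      (\<psi> (unit_vec t k) + finsum_vec TYPE('a) t (\<lambda>j. ?c j \<cdot>\<^sub>v unit_vec t j) {0..<t})"
    using lifts map_carrier
    by (intro cong_diag_add cong_diag_refl cong_diag_finsum cong_diag_smult finsum_vec_closed) auto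
  also have "\<psi> (unit_vec t k) + finsum_vec TYPE('a) t (\<lambda>j. ?c j \<cdot>\<^sub>v unit_vec t j) {0..<t} = 0\<^sub>v t"
    using map_carrier unit_vec_carrier unfolding finsum_vec_unit_vec by (intro eq_vecI) auto
  finally show ?thesis
    using kernel lifts by (simp add: finsum_vec_closed)
qed

end

lemma quotient_iso_diag_generators:
  fixes K :: "'a::comm_ring_1 vec set"
  assumes "quotient_iso_diag \<pi> t K a"
  obtains y z c where
    "\<And>j. j < t \<Longrightarrow> y j \<in> carrier_vec t" "\<And>j. j < t \<Longrightarrow> \<pi> ^ a (Suc j) \<cdot>\<^sub>v y j \<in> K"
    "\<And>k. k < t \<Longrightarrow> z k \<in> carrier_vec t" "\<And>k. k < t \<Longrightarrow> z k \<in> K"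
    "\<And>k. k < t \<Longrightarrow> unit_vec t k = finsum_vec TYPE('a) t (\<lambda>j. c k j \<cdot>\<^sub>v y j) {0..<t} + z k"
proof -
  from assms obtain \<psi> where "diag_quotient_map \<pi> t a K \<psi>"
    unfolding quotient_iso_diag_iff ..
  then interpret diag_quotient_map \<pi> t a K \<psi> .
  have "\<forall>j. \<exists>x. j < t \<longrightarrow> x \<in> carrier_vec t \<and> cong_diag \<pi> t a (\<psi> x) (unit_vec t j)"
    using map_surj unit_vec_carrier by blast
  then obtain y
    where y: "\<And>j. j < t \<Longrightarrow> y j \<in> carrier_vec t \<and> cong_diag \<pi> t a (\<psi> (y j)) (unit_vec t j)"
    by (metis choice)
  then have y_carrier: "\<And>j. j < t \<Longrightarrow> y j \<in> carrier_vec t" by blast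
  define c where "c k j = \<psi> (unit_vec t k) $ j" for k j
  define z where "z k = unit_vec t k + finsum_vec TYPE('a) t (\<lambda>j. (- c k j) \<cdot>\<^sub>v y j) {0..<t}" for k
  have dim: "dim_vec (finsum_vec TYPE('a) t (\<lambda>j. f j \<cdot>\<^sub>v y j) {0..<t}) = t" for f
    using y_carrier by (intro carrier_vecD finsum_vec_closed) auto
  have index: "finsum_vec TYPE('a) t (\<lambda>j. f j \<cdot>\<^sub>v y j) {0..<t} $ i = (\<Sum>j\<in>{0..<t}. f j * y j $ i)"
    if "i < t" for f i
    using y_carrier that
    by (auto intro!: sum.cong simp: index_finsum_vec y_carrier[THEN carrier_vecD])
  have "unit_vec t k = finsum_vec TYPE('a) t (\<lambda>j. c k j \<cdot>\<^sub>v y j) {0..<t} + z k" for k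
    unfolding z_def by (intro eq_vecI) (auto simp: dim index sum_negf)
  moreover have "z k \<in> carrier_vec t" for k
    unfolding z_def
    by (intro add_carrier_vec unit_vec_carrier finsum_vec_closed) (use y_carrier in auto)
  ultimately show ?thesis
    using y smult_lift_mem lift_correction_mem[OF y]
    by (intro that[of y z c]) (auto simp: z_def c_def)
qed

lemma quotient_iso_diag_spanning_family:
  fixes K :: "'a::comm_ring_1 vec set"
  assumes "quotient_iso_diag \<pi> t K a"
  obtains V c where
    "\<And>m. m < 2 * t \<Longrightarrow> V m \<in> carrier_vec t"
    "\<And>m. m < t \<Longrightarrow> \<pi> ^ a (Suc m) \<cdot>\<^sub>v V m \<in> K" "\<And>m. t \<le> m \<Longrightarrow> m < 2 * t \<Longrightarrow> V m \<in> K"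
    "\<And>k. k < t \<Longrightarrow> unit_vec t k = finsum_vec TYPE('a) t (\<lambda>m. c k m \<cdot>\<^sub>v V m) {0..<2 * t}"
proof -
  obtain y z c where y: "\<And>j. j < t \<Longrightarrow> y j \<in> carrier_vec t" "\<And>j. j < t \<Longrightarrow> \<pi> ^ a (Suc j) \<cdot>\<^sub>v y j \<in> K"
    and z: "\<And>k. k < t \<Longrightarrow> z k \<in> carrier_vec t" "\<And>k. k < t \<Longrightarrow> z k \<in> K"
    and span: "\<And>k. k < t \<Longrightarrow> unit_vec t k = finsum_vec TYPE('a) t (\<lambda>j. c k j \<cdot>\<^sub>v y j) {0..<t} + z k"
    using quotient_iso_diag_generators[OF assms] by blast
  define V where "V m = (if m < t then y m else z (m - t))" for m
  define c' where "c' k m = (if m < t then c k m else of_bool (m = t + k))" for k m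
  have V: "V m \<in> carrier_vec t" if "m < 2 * t" for m
    using that y z by (simp add: V_def)
  have dim: "dim_vec (finsum_vec TYPE('a) t (\<lambda>m. c' k m \<cdot>\<^sub>v V m) {0..<2 * t}) = t" for k
    using V by (intro carrier_vecD finsum_vec_closed) auto
  have "unit_vec t k = finsum_vec TYPE('a) t (\<lambda>m. c' k m \<cdot>\<^sub>v V m) {0..<2 * t}" if k: "k < t" for k
  proof (rule eq_vecI)
    fix i assume "i < dim_vec (finsum_vec TYPE('a) t (\<lambda>m. c' k m \<cdot>\<^sub>v V m) {0..<2 * t})"
    then have i: "i < t" by (simp add: dim)
    have "finsum_vec TYPE('a) t (\<lambda>m. c' k m \<cdot>\<^sub>v V m) {0..<2 * t} $ i
        = (\<Sum>m\<in>{0..<2 * t}. c' k m * V m $ i)"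
      using V i by (auto simp: index_finsum_vec V[THEN carrier_vecD] intro!: sum.cong)
    also have "\<dots> = (\<Sum>m\<in>{0..<t}. c' k m * V m $ i) + (\<Sum>m\<in>{t..<2 * t}. c' k m * V m $ i)"
      by (rule sum.atLeastLessThan_concat[symmetric]) auto
    also have "(\<Sum>m\<in>{0..<t}. c' k m * V m $ i) = (\<Sum>j\<in>{0..<t}. c k j * y j $ i)"
      by (rule sum.cong) (auto simp: c'_def V_def)
    also have "(\<Sum>m\<in>{t..<2 * t}. c' k m * V m $ i) =
        (\<Sum>m\<in>{t..<2 * t}. if m = t + k then z k $ i else 0)"
      by (rule sum.cong) (auto simp: c'_def V_def)
    also have "\<dots> = z k $ i" using k by simp
    also have "(\<Sum>j\<in>{0..<t}. c k j * y j $ i) = finsum_vec TYPE('a) t (\<lambda>j. c k j \<cdot>\<^sub>v y j) {0..<t} $ i"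
      using y i by (auto simp: index_finsum_vec y(1)[THEN carrier_vecD] intro!: sum.cong)
    also have "\<dots> + z k $ i = unit_vec t k $ i"
      using span[OF k] i z(1)[OF k] by simp
    finally show "unit_vec t k $ i = finsum_vec TYPE('a) t (\<lambda>m. c' k m \<cdot>\<^sub>v V m) {0..<2 * t} $ i" ..
  qed (simp add: dim)
  then show ?thesis using V y z by (intro that[of V c']) (auto simp: V_def)
qed

lemma dvd_mult_mat_vec_smult_cancel:
  fixes \<pi> :: "'a::idom"
  assumes "\<pi> \<noteq> 0" "e \<le> n" "A \<in> carrier_mat t t" "y \<in> carrier_vec t" "i < t"
    and "\<pi> ^ n dvd (A *\<^sub>v (\<pi> ^ e \<cdot>\<^sub>v y)) $ i"
  shows "\<pi> ^ (n - e) dvd (A *\<^sub>v y) $ i"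
proof -
  have "\<pi> ^ e * \<pi> ^ (n - e) dvd \<pi> ^ e * (A *\<^sub>v y) $ i"
    using assms by (simp add: mult_mat_vec power_add[symmetric])
  then show ?thesis using assms(1) by simp
qed

lemma quotient_iso_diag_spanning_family_mult_dvd:
  fixes \<xi> :: "'a::idom mat"
  assumes \<pi>: "\<pi> \<noteq> 0" and quot: "quotient_iso_diag \<pi> t K a" and \<xi>: "\<xi> \<in> carrier_mat t t"
    and \<xi>_K: "\<forall>x\<in>K. \<forall>i<t. \<pi> ^ n dvd (\<xi> *\<^sub>v x) $ i" and a_le_n: "\<And>j. j < t \<Longrightarrow> a (Suc j) \<le> n"
  obtains V c where "\<And>m. m \<in> {0..<2 * t} \<Longrightarrow> V m \<in> carrier_vec t"
    "\<And>k. k < t \<Longrightarrow> unit_vec t k = finsum_vec TYPE('a) t (\<lambda>m. c k m \<cdot>\<^sub>v V m) {0..<2 * t}"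
    "\<And>m i. m \<in> {0..<2 * t} \<Longrightarrow> i < t \<Longrightarrow>
      \<pi> ^ (if m < t then n - a (Suc m) else n) dvd (\<xi> *\<^sub>v V m) $ i"
proof -
  obtain V c where V: "\<And>m. m < 2 * t \<Longrightarrow> V m \<in> carrier_vec t"
    and V_lifts: "\<And>m. m < t \<Longrightarrow> \<pi> ^ a (Suc m) \<cdot>\<^sub>v V m \<in> K"
    and V_ker: "\<And>m. t \<le> m \<Longrightarrow> m < 2 * t \<Longrightarrow> V m \<in> K"
    and span: "\<And>k. k < t \<Longrightarrow> unit_vec t k = finsum_vec TYPE('a) t (\<lambda>m. c k m \<cdot>\<^sub>v V m) {0..<2 * t}"
    using quotient_iso_diag_spanning_family[OF quot] by blast
  have "\<pi> ^ (if m < t then n - a (Suc m) else n) dvd (\<xi> *\<^sub>v V m) $ i"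
    if m: "m \<in> {0..<2 * t}" and i: "i < t" for m i
  proof (cases "m < t")
    case True
    then have "a (Suc m) \<le> n" "V m \<in> carrier_vec t" using a_le_n V by auto
    moreover have "\<pi> ^ n dvd (\<xi> *\<^sub>v (\<pi> ^ a (Suc m) \<cdot>\<^sub>v V m)) $ i"
      using \<xi>_K V_lifts[OF True] i by blast
    ultimately show ?thesis
      using dvd_mult_mat_vec_smult_cancel[OF \<pi> _ \<xi> _ i] True by simp
  next
    case False
    then show ?thesis using \<xi>_K V_ker m i by simp
  qed
  then show ?thesis using V span by (intro that[of V c]) auto
qed

lemma Op_ring_uniformizer_nonzero:
  assumes "Op_ring p TYPE('a::idom)"
  shows "(of_nat p :: 'a) \<noteq> 0"
proof
  assume "(of_nat p :: 'a) = 0"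
  then have "p = 0" using assms unfolding Op_ring_def by (metis injD of_nat_0)
  then show False using assms by (simp add: Op_ring_def)
qed

lemma Op_ring_unit_if_not_dvd:
  assumes "Op_ring p TYPE('a::idom)" and "\<not> (of_nat p :: 'a) dvd x"
  shows "x dvd 1"
proof -
  have "x \<noteq> 0" using assms(2) by auto
  then obtain u k where u: "u dvd 1" and x: "x = u * of_nat p ^ k"
    using assms(1) unfolding Op_ring_def by blast
  have "k = 0"
    using assms(2) unfolding x by (cases k) auto
  then show ?thesis using u x by simp
qed

theorem lemma4p2:
  fixes p t n :: nat and a :: "nat \<Rightarrow> nat"
    and \<xi> :: "'a::idom mat" and K :: "'a vec set"
  assumes Op: "Op_ring p TYPE('a)"
    and xi: "\<xi> \<in> carrier_mat t t"
    and K_sub: "K \<subseteq> carrier_vec t"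
    and K_zero: "0\<^sub>v t \<in> K"
    and K_add: "\<forall>x\<in>K. \<forall>y\<in>K. x + y \<in> K"
    and K_smult: "\<forall>c. \<forall>x\<in>K. c \<cdot>\<^sub>v x \<in> K"
    and K_xi: "\<forall>x\<in>K. \<xi> *\<^sub>v x \<in> K"
    and xi_K: "\<forall>x\<in>K. \<forall>i<t. (of_nat p :: 'a) ^ n dvd (\<xi> *\<^sub>v x) $ i"
    and quot: "quotient_iso_diag (of_nat p :: 'a) t K a"
    and a_le_n: "\<forall>i. 1 \<le> i \<and> i \<le> t \<longrightarrow> a i \<le> n"
    and a_mono: "\<forall>i j. 1 \<le> i \<and> i \<le> j \<and> j \<le> t \<longrightarrow> a j \<le> a i"
  shows "\<forall>s\<le>t. (of_nat p :: 'a) ^ (\<Sum>i=1..s. n - a i) dvd coeff (char_poly \<xi>) (t - s)"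
proof (intro allI impI)
  fix s assume s: "s \<le> t"
  define \<pi> where "\<pi> = (of_nat p :: 'a)"
  define b where "b m = (if m < t then n - a (Suc m) else n)" for m
  have b_mono: "mono b"
  proof (rule monoI)
    fix i j :: nat assume "i \<le> j"
    then show "b i \<le> b j"
      using a_mono[rule_format, of "Suc i" "Suc j"] by (auto simp: b_def diff_le_mono2)
  qed
  obtain V c where V: "\<And>m. m \<in> {0..<2 * t} \<Longrightarrow> V m \<in> carrier_vec t"
    and span: "\<And>k. k < t \<Longrightarrow> unit_vec t k = finsum_vec TYPE('a) t (\<lambda>m. c k m \<cdot>\<^sub>v V m) {0..<2 * t}"
    and \<xi>_V: "\<And>m i. m \<in> {0..<2 * t} \<Longrightarrow> i < t \<Longrightarrow> \<pi> ^ b m dvd (\<xi> *\<^sub>v V m) $ i"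
    using quotient_iso_diag_spanning_family_mult_dvd[OF Op_ring_uniformizer_nonzero[OF Op]
        quot xi xi_K] a_le_n
    unfolding b_def \<pi>_def by auto
  have "\<not> \<pi> dvd 1" using Op unfolding Op_ring_def \<pi>_def by blast
  then have "\<pi> ^ (\<Sum>j<s. b j) dvd coeff (char_poly \<xi>) (t - s)"
    using Op_ring_unit_if_not_dvd[OF Op, folded \<pi>_def]
    by (intro coeff_char_poly_dvd_generating_family
        [OF xi _ _ finite_atLeastLessThan V span \<xi>_V b_mono s])
  moreover have "(\<Sum>i=1..s. n - a i) = (\<Sum>j<s. b j)"
    using s by (simp add: sum.atLeast1_atMost_eq b_def)
  ultimately show "\<pi> ^ (\<Sum>i=1..s. n - a i) dvd coeff (char_poly \<xi>) (t - s)" by simp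
qed

end
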